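(* Let $f\colon\mathbb{R}^n\to\mathbb{R}$ be differentiable, $\mu$-strongly convex, with $\|\nabla f(x)-\nabla f(y)\|\le L\|x-y\|$ for all $x,y$ (Euclidean norm), where $0<\mu<L$, and let $x_\star$ be its minimizer, $f_\star=f(x_\star)$. Let $\kappa=L/\mu$ and $\gamma=\frac{\sqrt{8\kappa+1}+3}{2\kappa-2}$. Given $x_0$, let $y_0=x_0$ and for $k=0,1,\dots$ \[ y_{k+1}=x_k-\tfrac1L\nabla f(x_k),\qquad x_{k+1}=y_{k+1}+\frac{1}{2\gamma+1}(y_{k+1}-y_k)+\frac{1}{2\gamma+1}(y_{k+1}-x_k). \] Then for $k=1,2,\dots$, \[ f(x_k)-f_\star\le\frac{(1+\gamma)^{-k+2}}{2\gamma}\cdot\frac{\mu+2L}{2}\,\|x_0-x_\star\|^2. \]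
   Context: A function $f$ is $\mu$-strongly convex if $f(x)-\frac{\mu}{2}\|x\|^2$ is convex. *)

theory Defs
  imports "HOL-Analysis.Analysis"
begin

definition strongly_convex_on :: "real \<Rightarrow> ('a::real_inner) set \<Rightarrow> ('a \<Rightarrow> real) \<Rightarrow> bool" where
  "strongly_convex_on \<mu> S f \<longleftrightarrow> convex_on S (\<lambda>x. f x - \<mu> / 2 * (norm x)\<^sup>2)"

end

theory Submission
  imports Defs
begin

(* The analysis rests on the Lyapunov function
     E k = f (x k) - f xstar + Q (x k - xstar) (y k - xstar) (grad f (x k))
   with an explicit quadratic form Q.  For a mu-strongly convex function with L-Lipschitz
   gradient, f u - f v is bounded below by the interpolation term
     <grad f v, u - v> + mu/2 |u - v|^2 + |grad f u - grad f v - mu (u - v)|^2 / (2 (L - mu)).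
   Adding this inequality for the pairs (xstar, x k) and (x k, x (k+1)) with weights gamma and
   1 + gamma to E k - (1 + gamma) E (k+1) leaves a sum of squares; this is exactly where
   kappa gamma^2 = (1 + gamma) (gamma + 2), the equation defining gamma, is used.  Hence
   E k <= E 0 / (1 + gamma)^k.  The two interpolation inequalities between x k and xstar give
   E k >= 2 gamma / (2 gamma + 1) (f (x k) - f xstar), and E 0 <= L^2 / (L - mu) |x 0 - xstar|^2. *)

section \<open>Strongly convex functions with Lipschitz gradient\<close>

lemma has_real_derivative_along_line:
  fixes f :: "'a::real_inner \<Rightarrow> real"
  assumes grad: "\<And>z. (f has_derivative (\<lambda>h. g z \<bullet> h)) (at z)"
  shows "((\<lambda>t. f (b + t *\<^sub>R v)) has_real_derivative (g (b + t *\<^sub>R v) \<bullet> v)) (at t)"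
proof -
  have "((\<lambda>t. b + t *\<^sub>R v) has_derivative (\<lambda>h. h *\<^sub>R v)) (at t)"
    by (auto intro!: derivative_eq_intros)
  from has_derivative_compose[OF this grad]
  have "((\<lambda>t. f (b + t *\<^sub>R v)) has_derivative (\<lambda>h. g (b + t *\<^sub>R v) \<bullet> (h *\<^sub>R v))) (at t)"
    by (simp add: o_def)
  moreover have "(\<lambda>h. g (b + t *\<^sub>R v) \<bullet> (h *\<^sub>R v)) = (*) (g (b + t *\<^sub>R v) \<bullet> v)"
    by (simp add: fun_eq_iff)
  ultimately show ?thesis
    by (simp add: has_field_derivative_def)
qed

lemma lipschitz_gradient_upper_bound:
  fixes f :: "'a::real_inner \<Rightarrow> real"
  assumes grad: "\<And>z. (f has_derivative (\<lambda>h. g z \<bullet> h)) (at z)"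
    and lip: "\<And>u v. norm (g u - g v) \<le> L * norm (u - v)"
  shows "f a \<le> f b + g b \<bullet> (a - b) + L / 2 * (norm (a - b))\<^sup>2"
proof -
  define v where "v = a - b"
  define \<phi> where "\<phi> t = f (b + t *\<^sub>R v) - t * (g b \<bullet> v) - L / 2 * t\<^sup>2 * (norm v)\<^sup>2" for t
  have "\<phi> 1 \<le> \<phi> 0"
  proof (rule DERIV_nonpos_imp_nonincreasing[of 0 1 \<phi>])
    fix t :: real
    assume t: "0 \<le> t" "t \<le> 1"
    have "(\<phi> has_real_derivative (g (b + t *\<^sub>R v) \<bullet> v - g b \<bullet> v - L * t * (norm v)\<^sup>2)) (at t)"
      unfolding \<phi>_def
      by (rule derivative_eq_intros has_real_derivative_along_line[OF grad] refl | simp)+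
    moreover have "g (b + t *\<^sub>R v) \<bullet> v - g b \<bullet> v \<le> L * t * (norm v)\<^sup>2"
    proof -
      have "g (b + t *\<^sub>R v) \<bullet> v - g b \<bullet> v \<le> norm (g (b + t *\<^sub>R v) - g b) * norm v"
        by (metis inner_diff_left norm_cauchy_schwarz)
      also have "\<dots> \<le> L * norm (t *\<^sub>R v) * norm v"
        using lip[of "b + t *\<^sub>R v" b] by (simp add: mult_right_mono)
      finally show ?thesis
        using t by (simp add: power2_eq_square mult.assoc)
    qed
    ultimately show "\<exists>y. (\<phi> has_real_derivative y) (at t) \<and> y \<le> 0"
      by auto
  qed simp
  then show ?thesis
    by (simp add: \<phi>_def v_def)
qed

lemma convex_on_imp_above_tangent_plane:
  fixes h :: "'a::real_inner \<Rightarrow> real"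
  assumes cvx: "convex_on UNIV h"
    and grad: "\<And>z. (h has_derivative (\<lambda>v. H z \<bullet> v)) (at z)"
  shows "h b + H b \<bullet> (a - b) \<le> h a"
proof -
  define \<psi> where "\<psi> t = h (b + t *\<^sub>R (a - b))" for t
  have "convex_on UNIV \<psi>"
  proof (rule convex_onI)
    fix t s u :: real
    assume "0 < t" "t < 1"
    have "b + ((1 - t) * s + t * u) *\<^sub>R (a - b)
        = (1 - t) *\<^sub>R (b + s *\<^sub>R (a - b)) + t *\<^sub>R (b + u *\<^sub>R (a - b))"
      by (simp add: algebra_simps)
    with \<open>0 < t\<close> \<open>t < 1\<close> show "\<psi> ((1 - t) *\<^sub>R s + t *\<^sub>R u) \<le> (1 - t) * \<psi> s + t * \<psi> u"
      unfolding \<psi>_def using convex_onD[OF cvx, of t] by simp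
  qed simp
  moreover have "(\<psi> has_real_derivative (H b \<bullet> (a - b))) (at 0 within UNIV)"
    unfolding \<psi>_def using has_real_derivative_along_line[OF grad, of b "a - b" 0] by simp
  ultimately have "H b \<bullet> (a - b) * (1 - 0) \<le> \<psi> 1 - \<psi> 0"
    by (intro convex_on_imp_above_tangent) auto
  then show ?thesis
    by (simp add: \<psi>_def)
qed

lemma gradient_zero_at_minimum:
  fixes f :: "'a::real_inner \<Rightarrow> real"
  assumes grad: "(f has_derivative (\<lambda>h. g z \<bullet> h)) (at z)"
    and minim: "\<And>y. f z \<le> f y"
  shows "g z = 0"
proof -
  have "(\<lambda>h. g z \<bullet> h) = (\<lambda>h. 0)"
    using minim by (intro differential_zero_maxmin[OF _ _ grad, of UNIV]) auto
  then have "g z \<bullet> g z = 0"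
    by metis
  then show ?thesis
    by simp
qed

lemma convex_smooth_interpolation:
  fixes h :: "'a::real_inner \<Rightarrow> real"
  assumes cvx: "convex_on UNIV h"
    and grad: "\<And>z. (h has_derivative (\<lambda>v. H z \<bullet> v)) (at z)"
    and upper: "\<And>z w. h z \<le> h w + H w \<bullet> (z - w) + M / 2 * (norm (z - w))\<^sup>2"
    and M: "0 < M"
  shows "h b + H b \<bullet> (a - b) + 1 / (2 * M) * (norm (H a - H b))\<^sup>2 \<le> h a"
proof -
  define \<Delta> where "\<Delta> = H a - H b"
  \<comment> \<open>\<open>z\<close> minimises the quadratic upper bound at \<open>a\<close> minus the tangent plane at \<open>b\<close>.\<close>
  define z where "z = a - (1 / M) *\<^sub>R \<Delta>"
  have "h b + H b \<bullet> (z - b) \<le> h a + H a \<bullet> (z - a) + M / 2 * (norm (z - a))\<^sup>2"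
    using convex_on_imp_above_tangent_plane[OF cvx grad, of b z] upper[of z a] by linarith
  moreover have "H a \<bullet> (z - a) - H b \<bullet> (z - b) = - (H b \<bullet> (a - b)) - 1 / M * (norm \<Delta>)\<^sup>2"
    by (simp add: z_def \<Delta>_def inner_diff_right inner_diff_left power2_norm_eq_inner algebra_simps)
  moreover have "M / 2 * (norm (z - a))\<^sup>2 = 1 / (2 * M) * (norm \<Delta>)\<^sup>2"
    using M by (simp add: z_def power2_eq_square field_simps)
  moreover have "1 / M * (norm \<Delta>)\<^sup>2 = 2 * (1 / (2 * M) * (norm \<Delta>)\<^sup>2)"
    by simp
  ultimately show ?thesis
    unfolding \<Delta>_def by linarith
qed

lemma strongly_convex_smooth_interpolation:
  fixes f :: "'a::real_inner \<Rightarrow> real"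
  assumes grad: "\<And>z. (f has_derivative (\<lambda>h. g z \<bullet> h)) (at z)"
    and sc: "strongly_convex_on \<mu> UNIV f"
    and lip: "\<And>u v. norm (g u - g v) \<le> L * norm (u - v)"
    and mu_L: "\<mu> < L"
  shows "f b + g b \<bullet> (a - b) + \<mu> / 2 * (norm (a - b))\<^sup>2
      + 1 / (2 * (L - \<mu>)) * (norm (g a - g b - \<mu> *\<^sub>R (a - b)))\<^sup>2 \<le> f a"
proof -
  define h where "h z = f z - \<mu> / 2 * (norm z)\<^sup>2" for z
  define H where "H z = g z - \<mu> *\<^sub>R z" for z
  have sq: "\<mu> / 2 * (norm z)\<^sup>2
      = \<mu> / 2 * (norm w)\<^sup>2 + \<mu> * (w \<bullet> (z - w)) + \<mu> / 2 * (norm (z - w))\<^sup>2" for z w :: 'a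
    by (simp add: power2_norm_eq_inner inner_diff_left inner_diff_right inner_commute algebra_simps)
  have H_inner: "H w \<bullet> v = g w \<bullet> v - \<mu> * (w \<bullet> v)" for w v
    by (simp add: H_def inner_diff_left)
  have "convex_on UNIV h"
    using sc unfolding strongly_convex_on_def h_def .
  moreover have "(h has_derivative (\<lambda>v. H z \<bullet> v)) (at z)" for z
  proof -
    have "(h has_derivative (\<lambda>v. g z \<bullet> v - \<mu> / 2 * (z \<bullet> v + v \<bullet> z))) (at z)"
      unfolding h_def power2_norm_eq_inner by (rule derivative_eq_intros grad refl)+
    moreover have "(\<lambda>v. g z \<bullet> v - \<mu> / 2 * (z \<bullet> v + v \<bullet> z)) = (\<lambda>v. H z \<bullet> v)"
      by (simp add: fun_eq_iff H_def inner_diff_left inner_diff_right inner_commute)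
    ultimately show ?thesis
      by simp
  qed
  moreover have "h z \<le> h w + H w \<bullet> (z - w) + (L - \<mu>) / 2 * (norm (z - w))\<^sup>2" for z w
  proof -
    have "(L - \<mu>) / 2 * (norm (z - w))\<^sup>2 = L / 2 * (norm (z - w))\<^sup>2 - \<mu> / 2 * (norm (z - w))\<^sup>2"
      by (simp add: field_simps)
    then show ?thesis
      using lipschitz_gradient_upper_bound[OF grad lip, of z w] sq[of z w] H_inner[of w "z - w"]
      unfolding h_def by linarith
  qed
  ultimately have "h b + H b \<bullet> (a - b) + 1 / (2 * (L - \<mu>)) * (norm (H a - H b))\<^sup>2 \<le> h a"
    using mu_L by (intro convex_smooth_interpolation) auto
  moreover have "H a - H b = g a - g b - \<mu> *\<^sub>R (a - b)"
    by (simp add: H_def algebra_simps)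
  ultimately have "h b + H b \<bullet> (a - b) + 1 / (2 * (L - \<mu>)) * (norm (g a - g b - \<mu> *\<^sub>R (a - b)))\<^sup>2 \<le> h a"
    by simp
  then show ?thesis
    using sq[of a b] H_inner[of b "a - b"] unfolding h_def by linarith
qed

lemma quadratic_form_nonneg:
  fixes u v :: "'a::real_inner"
  assumes A: "0 < A" and discr: "B\<^sup>2 \<le> A * C"
  shows "0 \<le> A * (norm u)\<^sup>2 + 2 * B * (u \<bullet> v) + C * (norm v)\<^sup>2"
proof -
  have "A * (A * (norm u)\<^sup>2 + 2 * B * (u \<bullet> v) + C * (norm v)\<^sup>2)
      = (norm (A *\<^sub>R u + B *\<^sub>R v))\<^sup>2 + (A * C - B\<^sup>2) * (norm v)\<^sup>2"
    unfolding power2_norm_eq_inner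
    by (simp add: inner_add_left inner_add_right inner_commute algebra_simps power2_eq_square)
  also have "\<dots> \<ge> 0"
    using discr by simp
  finally show ?thesis
    using A by (simp add: zero_le_mult_iff)
qed

section \<open>Identities in the span of four vectors\<close>

text \<open>Every vector in the identities below is a linear combination of at most four vectors.
  Written as \<open>comb4\<close>, the two sides of such an identity become Gram forms \<open>gram4\<close>, and the
  identity splits into ten scalar identities between their coefficients, which are proved one at
  a time; expanding all inner products in one go is far too slow.\<close>

definition comb4 ::
    "'a \<Rightarrow> 'a \<Rightarrow> 'a \<Rightarrow> 'a \<Rightarrow> real \<Rightarrow> real \<Rightarrow> real \<Rightarrow> real \<Rightarrow> 'a::real_vector" where
  "comb4 B1 B2 B3 B4 a1 a2 a3 a4 = a1 *\<^sub>R B1 + a2 *\<^sub>R B2 + a3 *\<^sub>R B3 + a4 *\<^sub>R B4"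

definition gram4 :: "'a::real_inner \<Rightarrow> 'a \<Rightarrow> 'a \<Rightarrow> 'a \<Rightarrow>
    real \<Rightarrow> real \<Rightarrow> real \<Rightarrow> real \<Rightarrow> real \<Rightarrow> real \<Rightarrow> real \<Rightarrow> real \<Rightarrow> real \<Rightarrow> real \<Rightarrow> real" where
  "gram4 B1 B2 B3 B4 c11 c12 c13 c14 c22 c23 c24 c33 c34 c44 =
     c11 * (B1 \<bullet> B1) + c12 * (B1 \<bullet> B2) + c13 * (B1 \<bullet> B3) + c14 * (B1 \<bullet> B4)
   + c22 * (B2 \<bullet> B2) + c23 * (B2 \<bullet> B3) + c24 * (B2 \<bullet> B4)
   + c33 * (B3 \<bullet> B3) + c34 * (B3 \<bullet> B4) + c44 * (B4 \<bullet> B4)"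

lemma comb4_add:
  "comb4 B1 B2 B3 B4 a1 a2 a3 a4 + comb4 B1 B2 B3 B4 b1 b2 b3 b4
    = comb4 B1 B2 B3 B4 (a1 + b1) (a2 + b2) (a3 + b3) (a4 + b4)"
  by (simp add: comb4_def algebra_simps)

lemma comb4_diff:
  "comb4 B1 B2 B3 B4 a1 a2 a3 a4 - comb4 B1 B2 B3 B4 b1 b2 b3 b4
    = comb4 B1 B2 B3 B4 (a1 - b1) (a2 - b2) (a3 - b3) (a4 - b4)"
  by (simp add: comb4_def algebra_simps)

lemma comb4_minus:
  "- comb4 B1 B2 B3 B4 a1 a2 a3 a4 = comb4 B1 B2 B3 B4 (- a1) (- a2) (- a3) (- a4)"
  by (simp add: comb4_def algebra_simps)

lemma scaleR_comb4:
  "k *\<^sub>R comb4 B1 B2 B3 B4 a1 a2 a3 a4 = comb4 B1 B2 B3 B4 (k * a1) (k * a2) (k * a3) (k * a4)"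
  by (simp add: comb4_def algebra_simps)

lemma inner_comb4:
  "comb4 B1 B2 B3 B4 a1 a2 a3 a4 \<bullet> comb4 B1 B2 B3 B4 b1 b2 b3 b4
    = gram4 B1 B2 B3 B4 (a1 * b1) (a1 * b2 + a2 * b1) (a1 * b3 + a3 * b1) (a1 * b4 + a4 * b1)
        (a2 * b2) (a2 * b3 + a3 * b2) (a2 * b4 + a4 * b2) (a3 * b3) (a3 * b4 + a4 * b3) (a4 * b4)"
  by (simp add: comb4_def gram4_def inner_simps inner_commute algebra_simps)

lemma gram4_add:
  "gram4 B1 B2 B3 B4 c11 c12 c13 c14 c22 c23 c24 c33 c34 c44
      + gram4 B1 B2 B3 B4 d11 d12 d13 d14 d22 d23 d24 d33 d34 d44
    = gram4 B1 B2 B3 B4 (c11 + d11) (c12 + d12) (c13 + d13) (c14 + d14) (c22 + d22)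
        (c23 + d23) (c24 + d24) (c33 + d33) (c34 + d34) (c44 + d44)"
  by (simp add: gram4_def algebra_simps)

lemma gram4_diff:
  "gram4 B1 B2 B3 B4 c11 c12 c13 c14 c22 c23 c24 c33 c34 c44
      - gram4 B1 B2 B3 B4 d11 d12 d13 d14 d22 d23 d24 d33 d34 d44
    = gram4 B1 B2 B3 B4 (c11 - d11) (c12 - d12) (c13 - d13) (c14 - d14) (c22 - d22)
        (c23 - d23) (c24 - d24) (c33 - d33) (c34 - d34) (c44 - d44)"
  by (simp add: gram4_def algebra_simps)

lemma mult_gram4:
  "k * gram4 B1 B2 B3 B4 c11 c12 c13 c14 c22 c23 c24 c33 c34 c44
    = gram4 B1 B2 B3 B4 (k * c11) (k * c12) (k * c13) (k * c14) (k * c22) (k * c23) (k * c24)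
        (k * c33) (k * c34) (k * c44)"
  by (simp add: gram4_def algebra_simps)

lemmas comb4_normalize =
  comb4_add comb4_diff comb4_minus scaleR_comb4 inner_comb4 gram4_add gram4_diff mult_gram4

lemma gram4_cong:
  "c11 = d11 \<Longrightarrow> c12 = d12 \<Longrightarrow> c13 = d13 \<Longrightarrow> c14 = d14 \<Longrightarrow> c22 = d22 \<Longrightarrow> c23 = d23 \<Longrightarrow>
    c24 = d24 \<Longrightarrow> c33 = d33 \<Longrightarrow> c34 = d34 \<Longrightarrow> c44 = d44 \<Longrightarrow>
    gram4 B1 B2 B3 B4 c11 c12 c13 c14 c22 c23 c24 c33 c34 c44
      = gram4 B1 B2 B3 B4 d11 d12 d13 d14 d22 d23 d24 d33 d34 d44"
  by simp

section \<open>The Lyapunov function\<close>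

locale momentum_parameters =
  fixes \<mu> L \<gamma> :: real
  assumes mu_pos: "0 < \<mu>" and gamma_pos: "0 < \<gamma>"
    and L_gamma: "L * \<gamma>\<^sup>2 = \<mu> * (1 + \<gamma>) * (\<gamma> + 2)"
begin

lemma L_eq: "L = \<mu> * (1 + \<gamma>) * (\<gamma> + 2) / \<gamma>\<^sup>2"
  using L_gamma gamma_pos by (simp add: field_simps)

lemma L_minus_mu_eq: "L - \<mu> = \<mu> * (3 * \<gamma> + 2) / \<gamma>\<^sup>2"
  using gamma_pos by (simp add: L_eq field_simps power2_eq_square)

lemma mu_less_L: "\<mu> < L"
proof -
  have "0 < \<mu> * (3 * \<gamma> + 2) / \<gamma>\<^sup>2"
    using mu_pos gamma_pos by simp
  then show ?thesis
    by (simp add: L_minus_mu_eq[symmetric])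
qed

definition lyapunov_quad :: "'a::real_inner \<Rightarrow> 'a \<Rightarrow> 'a \<Rightarrow> real" where
  "lyapunov_quad X Y G =
     \<mu> * L / (2 * (L - \<mu>)) * (norm (X + ((1 + \<gamma>) / \<gamma>) *\<^sub>R (X - Y)))\<^sup>2
   + 1 / (2 * (L - \<mu>)) * (norm (G - L *\<^sub>R (X - Y)))\<^sup>2 - L / 2 * (norm (X - Y))\<^sup>2"

definition interpolation_term :: "'a::real_inner \<Rightarrow> 'a \<Rightarrow> 'a \<Rightarrow> real" where
  "interpolation_term d gu gv =
     gv \<bullet> d + \<mu> / 2 * (norm d)\<^sup>2 + 1 / (2 * (L - \<mu>)) * (norm (gu - gv - \<mu> *\<^sub>R d))\<^sup>2"

lemma lyapunov_quad_step_identity: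
  fixes X Y G X' Y' G' :: "'a::real_inner"
  assumes y_next: "Y' = X - (1 / L) *\<^sub>R G"
    and x_next: "X' = Y' + (1 / (2 * \<gamma> + 1)) *\<^sub>R (Y' - Y) + (1 / (2 * \<gamma> + 1)) *\<^sub>R (Y' - X)"
  shows "lyapunov_quad X Y G - (1 + \<gamma>) * lyapunov_quad X' Y' G'
      + \<gamma> * interpolation_term (- X) 0 G + (1 + \<gamma>) * interpolation_term (X - X') G G'
    = \<mu> * (1 + \<gamma>) * (2 * \<gamma> + 1) * (\<gamma> + 2) / (2 * \<gamma> * (3 * \<gamma> + 2)) * (norm (X - Y))\<^sup>2
      + \<gamma> ^ 3 / (\<mu> * (\<gamma> + 2) * (3 * \<gamma> + 2)) * (norm G)\<^sup>2"
proof -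
  \<comment> \<open>Opaque names for the linear factors stop \<open>field_simps\<close> from multiplying them out,
    so that it can still see they are nonzero.\<close>
  obtain r q p a where r: "r = 1 + \<gamma>" and q: "q = \<gamma> + 2" and p: "p = 3 * \<gamma> + 2" and a: "a = 2 * \<gamma> + 1"
    by simp
  have nz: "\<gamma> \<noteq> 0" "\<mu> \<noteq> 0" "r \<noteq> 0" "q \<noteq> 0" "p \<noteq> 0" "a \<noteq> 0"
    using gamma_pos mu_pos r q p a by auto
  \<comment> \<open>Fresh names for the basis keep the rewrite rules \<open>X = comb4 B1 \<dots> 1 0 0 0\<close> from looping.\<close>
  obtain B1 B2 B3 B4 where B: "B1 = X" "B2 = Y" "B3 = G" "B4 = G'"
    by blast
  have XB: "X = comb4 B1 B2 B3 B4 1 0 0 0" "Y = comb4 B1 B2 B3 B4 0 1 0 0"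
     "G = comb4 B1 B2 B3 B4 0 0 1 0" "G' = comb4 B1 B2 B3 B4 0 0 0 1"
     "0 = comb4 B1 B2 B3 B4 0 0 0 0"
    by (simp_all add: B comb4_def)
  show ?thesis
    unfolding x_next y_next lyapunov_quad_def interpolation_term_def power2_norm_eq_inner L_minus_mu_eq
    unfolding r[symmetric] q[symmetric] p[symmetric] a[symmetric]
    unfolding L_eq r[symmetric] q[symmetric]
    unfolding XB
    apply (simp only: comb4_normalize)
    apply (rule gram4_cong)
    apply (simp_all add: nz field_simps)
    apply (simp_all add: r q p a)
    apply algebra+
    done
qed

lemma lyapunov_quad_lower_identity:
  fixes X Y G :: "'a::real_inner"
  defines "D \<equiv> 2 * \<gamma>\<^sup>2 + 2 * \<gamma> + 1"
  shows "lyapunov_quad X Y G + (1 / (2 * \<gamma> + 1) + \<gamma> / (1 + \<gamma>)) * interpolation_term X G 0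
      + \<gamma> / (1 + \<gamma>) * interpolation_term (- X) 0 G
    = \<mu> * (1 + \<gamma>) * (\<gamma> + 2) * D / (2 * \<gamma>\<^sup>2 * (3 * \<gamma> + 2))
        * (norm (X - Y + (\<gamma> * (1 + \<gamma>) / D) *\<^sub>R X - (\<gamma>\<^sup>2 / (\<mu> * D)) *\<^sub>R G))\<^sup>2
      + \<mu> * (\<gamma> + 2) * (10 * \<gamma> ^ 4 + 17 * \<gamma> ^ 3 + 13 * \<gamma>\<^sup>2 + 5 * \<gamma> + 1)
          / (2 * (2 * \<gamma> + 1) * (3 * \<gamma> + 2) * D) * (norm X)\<^sup>2
      + 2 * (- \<gamma>\<^sup>2 * (6 * \<gamma> ^ 4 + 15 * \<gamma> ^ 3 + 15 * \<gamma>\<^sup>2 + 6 * \<gamma> + 1)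
          / (2 * (1 + \<gamma>) * (2 * \<gamma> + 1) * (3 * \<gamma> + 2) * D)) * (X \<bullet> G)
      + \<gamma> ^ 3 * (10 * \<gamma> ^ 3 + 15 * \<gamma>\<^sup>2 + 8 * \<gamma> + 1)
          / (2 * \<mu> * (1 + \<gamma>) * (2 * \<gamma> + 1) * (3 * \<gamma> + 2) * D) * (norm G)\<^sup>2"
proof -
  obtain r q p a where r: "r = 1 + \<gamma>" and q: "q = \<gamma> + 2" and p: "p = 3 * \<gamma> + 2" and a: "a = 2 * \<gamma> + 1"
    by simp
  have "0 < D"
    unfolding D_def using gamma_pos by (simp add: add_pos_pos)
  then have nz: "\<gamma> \<noteq> 0" "\<mu> \<noteq> 0" "r \<noteq> 0" "q \<noteq> 0" "p \<noteq> 0" "a \<noteq> 0" "D \<noteq> 0"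
    using gamma_pos mu_pos r q p a by auto
  obtain B1 B2 B3 B4 :: 'a where B: "B1 = X" "B2 = Y" "B3 = G" "B4 = 0"
    by blast
  have XB: "X = comb4 B1 B2 B3 B4 1 0 0 0" "Y = comb4 B1 B2 B3 B4 0 1 0 0"
     "G = comb4 B1 B2 B3 B4 0 0 1 0" "0 = comb4 B1 B2 B3 B4 0 0 0 0"
    by (simp_all add: B comb4_def)
  show ?thesis
    unfolding lyapunov_quad_def interpolation_term_def power2_norm_eq_inner L_minus_mu_eq
    unfolding r[symmetric] q[symmetric] p[symmetric] a[symmetric]
    unfolding L_eq r[symmetric] q[symmetric]
    unfolding XB
    apply (simp only: comb4_normalize)
    apply (rule gram4_cong)
    apply (simp_all add: nz field_simps)
    apply (simp_all add: r q p a D_def)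
    apply algebra+
    done
qed

lemma lower_identity_discriminant:
  defines "D \<equiv> 2 * \<gamma>\<^sup>2 + 2 * \<gamma> + 1"
  shows "(- \<gamma>\<^sup>2 * (6 * \<gamma> ^ 4 + 15 * \<gamma> ^ 3 + 15 * \<gamma>\<^sup>2 + 6 * \<gamma> + 1)
          / (2 * (1 + \<gamma>) * (2 * \<gamma> + 1) * (3 * \<gamma> + 2) * D))\<^sup>2
    \<le> \<mu> * (\<gamma> + 2) * (10 * \<gamma> ^ 4 + 17 * \<gamma> ^ 3 + 13 * \<gamma>\<^sup>2 + 5 * \<gamma> + 1)
          / (2 * (2 * \<gamma> + 1) * (3 * \<gamma> + 2) * D)
      * (\<gamma> ^ 3 * (10 * \<gamma> ^ 3 + 15 * \<gamma>\<^sup>2 + 8 * \<gamma> + 1)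
          / (2 * \<mu> * (1 + \<gamma>) * (2 * \<gamma> + 1) * (3 * \<gamma> + 2) * D))"
proof -
  obtain r q p a where r: "r = 1 + \<gamma>" and q: "q = \<gamma> + 2" and p: "p = 3 * \<gamma> + 2" and a: "a = 2 * \<gamma> + 1"
    by simp
  obtain W P Z where W: "W = 6 * \<gamma> ^ 4 + 15 * \<gamma> ^ 3 + 15 * \<gamma>\<^sup>2 + 6 * \<gamma> + 1"
    and P: "P = 10 * \<gamma> ^ 4 + 17 * \<gamma> ^ 3 + 13 * \<gamma>\<^sup>2 + 5 * \<gamma> + 1"
    and Z: "Z = 10 * \<gamma> ^ 3 + 15 * \<gamma>\<^sup>2 + 8 * \<gamma> + 1"
    by simp
  define K where "K = 4 * r\<^sup>2 * a\<^sup>2 * p\<^sup>2 * D\<^sup>2"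
  have "0 < D"
    unfolding D_def using gamma_pos by (simp add: add_pos_pos)
  then have pos: "0 < r" "0 < q" "0 < p" "0 < a" "0 < K"
    using gamma_pos by (simp_all add: r q p a K_def)
  have "r * q * P * Z - \<gamma> * W\<^sup>2
      = 2 + 28 * \<gamma> + 164 * \<gamma>\<^sup>2 + 563 * \<gamma> ^ 3 + 1258 * \<gamma> ^ 4 + 1892 * \<gamma> ^ 5
        + 1904 * \<gamma> ^ 6 + 1220 * \<gamma> ^ 7 + 440 * \<gamma> ^ 8 + 64 * \<gamma> ^ 9"
    unfolding r q W P Z by algebra
  also have "\<dots> \<ge> 0"
    using gamma_pos by simp
  finally have "\<gamma> ^ 3 * (\<gamma> * W\<^sup>2) / K \<le> \<gamma> ^ 3 * (r * q * P * Z) / K"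
    using gamma_pos pos by (intro divide_right_mono mult_left_mono) auto
  moreover have "(- \<gamma>\<^sup>2 * W / (2 * r * a * p * D))\<^sup>2 = \<gamma> ^ 3 * (\<gamma> * W\<^sup>2) / K"
    by (simp add: K_def power2_eq_square power3_eq_cube field_simps)
  moreover have "\<mu> * q * P / (2 * a * p * D) * (\<gamma> ^ 3 * Z / (2 * \<mu> * r * a * p * D))
      = \<gamma> ^ 3 * (r * q * P * Z) / K"
    using mu_pos pos \<open>0 < D\<close> by (simp add: K_def power2_eq_square field_simps)
  ultimately show ?thesis
    unfolding r q p a W P Z by simp
qed

lemma lyapunov_quad_lower_bound:
  fixes X Y G :: "'a::real_inner"
  shows "0 \<le> lyapunov_quad X Y G + (1 / (2 * \<gamma> + 1) + \<gamma> / (1 + \<gamma>)) * interpolation_term X G 0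
      + \<gamma> / (1 + \<gamma>) * interpolation_term (- X) 0 G"
proof -
  define D where "D = 2 * \<gamma>\<^sup>2 + 2 * \<gamma> + 1"
  have "0 < D"
    unfolding D_def using gamma_pos by (simp add: add_pos_pos)
  have "0 \<le> \<mu> * (1 + \<gamma>) * (\<gamma> + 2) * D / (2 * \<gamma>\<^sup>2 * (3 * \<gamma> + 2))
        * (norm (X - Y + (\<gamma> * (1 + \<gamma>) / D) *\<^sub>R X - (\<gamma>\<^sup>2 / (\<mu> * D)) *\<^sub>R G))\<^sup>2"
    using mu_pos gamma_pos \<open>0 < D\<close> by simp
  moreover have "0 \<le> \<mu> * (\<gamma> + 2) * (10 * \<gamma> ^ 4 + 17 * \<gamma> ^ 3 + 13 * \<gamma>\<^sup>2 + 5 * \<gamma> + 1)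
          / (2 * (2 * \<gamma> + 1) * (3 * \<gamma> + 2) * D) * (norm X)\<^sup>2
      + 2 * (- \<gamma>\<^sup>2 * (6 * \<gamma> ^ 4 + 15 * \<gamma> ^ 3 + 15 * \<gamma>\<^sup>2 + 6 * \<gamma> + 1)
          / (2 * (1 + \<gamma>) * (2 * \<gamma> + 1) * (3 * \<gamma> + 2) * D)) * (X \<bullet> G)
      + \<gamma> ^ 3 * (10 * \<gamma> ^ 3 + 15 * \<gamma>\<^sup>2 + 8 * \<gamma> + 1)
          / (2 * \<mu> * (1 + \<gamma>) * (2 * \<gamma> + 1) * (3 * \<gamma> + 2) * D) * (norm G)\<^sup>2"
    using mu_pos gamma_pos \<open>0 < D\<close>
    by (intro quadratic_form_nonneg lower_identity_discriminant[folded D_def] divide_pos_pos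
        mult_pos_pos add_pos_pos) auto
  ultimately show ?thesis
    using lyapunov_quad_lower_identity[of X Y G, folded D_def] by linarith
qed

lemma initial_constant_le: "(2 * \<gamma> + 1) * (L\<^sup>2 / (L - \<mu>)) \<le> (1 + \<gamma>)\<^sup>2 * ((\<mu> + 2 * L) / 2)"
proof -
  obtain r q p a where r: "r = 1 + \<gamma>" and q: "q = \<gamma> + 2" and p: "p = 3 * \<gamma> + 2" and a: "a = 2 * \<gamma> + 1"
    by simp
  have pos: "0 < r" "0 < q" "0 < p" "0 < a"
    using gamma_pos by (simp_all add: r q p a)
  have "2 * a * q\<^sup>2 \<le> p * (\<gamma>\<^sup>2 + 2 * r * q)"
    using gamma_pos by (simp add: r q p a power2_eq_square algebra_simps)
  then have "\<mu> * r\<^sup>2 * (2 * a * q\<^sup>2) / (2 * p * \<gamma>\<^sup>2) \<le> \<mu> * r\<^sup>2 * (p * (\<gamma>\<^sup>2 + 2 * r * q)) / (2 * p * \<gamma>\<^sup>2)"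
    using mu_pos pos gamma_pos by (intro divide_right_mono mult_left_mono) auto
  moreover have "a * (L\<^sup>2 / (L - \<mu>)) = \<mu> * r\<^sup>2 * (2 * a * q\<^sup>2) / (2 * p * \<gamma>\<^sup>2)"
    unfolding L_minus_mu_eq p[symmetric] unfolding L_eq r[symmetric] q[symmetric]
    using mu_pos pos gamma_pos by (simp add: power2_eq_square field_simps)
  moreover have "r\<^sup>2 * ((\<mu> + 2 * L) / 2) = \<mu> * r\<^sup>2 * (p * (\<gamma>\<^sup>2 + 2 * r * q)) / (2 * p * \<gamma>\<^sup>2)"
    using pos gamma_pos by (simp add: L_eq r[symmetric] q[symmetric] power2_eq_square field_simps)
  ultimately show ?thesis
    unfolding a r by simp
qed

lemma lyapunov_quad_diagonal:
  fixes X G :: "'a::real_inner"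
  shows "lyapunov_quad X X G - interpolation_term (- X) 0 G = L / (L - \<mu>) * (G \<bullet> X)"
proof -
  define M where "M = L - \<mu>"
  have L: "L = \<mu> + M" and "M \<noteq> 0"
    using mu_less_L by (simp_all add: M_def)
  then show ?thesis
    unfolding lyapunov_quad_def interpolation_term_def power2_norm_eq_inner unfolding L
    by (simp add: inner_diff_left inner_diff_right inner_commute field_simps power2_eq_square)
qed

end

section \<open>Convergence of the method\<close>

locale momentum_method = momentum_parameters +
  fixes f :: "'a::real_inner \<Rightarrow> real" and g :: "'a \<Rightarrow> 'a"
    and xstar :: 'a and x y :: "nat \<Rightarrow> 'a"
  assumes grad: "\<And>z. (f has_derivative (\<lambda>h. g z \<bullet> h)) (at z)"
    and strongly_convex: "strongly_convex_on \<mu> UNIV f"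
    and lipschitz: "\<And>u v. norm (g u - g v) \<le> L * norm (u - v)"
    and minimizer: "\<And>z. f xstar \<le> f z"
    and y_0: "y 0 = x 0"
    and y_step: "\<And>j. y (Suc j) = x j - (1 / L) *\<^sub>R g (x j)"
    and x_step: "\<And>j. x (Suc j) = y (Suc j) + (1 / (2 * \<gamma> + 1)) *\<^sub>R (y (Suc j) - y j)
        + (1 / (2 * \<gamma> + 1)) *\<^sub>R (y (Suc j) - x j)"
begin

lemma gradient_minimizer: "g xstar = 0"
  using grad minimizer by (rule gradient_zero_at_minimum)

lemma interpolation: "f v + interpolation_term (u - v) (g u) (g v) \<le> f u"
  using strongly_convex_smooth_interpolation[OF grad strongly_convex lipschitz mu_less_L, of v u]
  by (simp add: interpolation_term_def)

lemma interpolation_minimizer: "f (x k) + interpolation_term (- (x k - xstar)) 0 (g (x k)) \<le> f xstar"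
  using interpolation[where u = xstar and v = "x k"] by (simp add: gradient_minimizer)

definition lyapunov :: "nat \<Rightarrow> real" where
  "lyapunov k = f (x k) - f xstar + lyapunov_quad (x k - xstar) (y k - xstar) (g (x k))"

lemma lyapunov_Suc_le: "(1 + \<gamma>) * lyapunov (Suc k) \<le> lyapunov k"
proof -
  let ?I1 = "interpolation_term (- (x k - xstar)) 0 (g (x k))"
  let ?I2 = "interpolation_term (x k - x (Suc k)) (g (x k)) (g (x (Suc k)))"
  have "lyapunov_quad (x k - xstar) (y k - xstar) (g (x k))
      - (1 + \<gamma>) * lyapunov_quad (x (Suc k) - xstar) (y (Suc k) - xstar) (g (x (Suc k)))
      + \<gamma> * ?I1 + (1 + \<gamma>) * ?I2
    = \<mu> * (1 + \<gamma>) * (2 * \<gamma> + 1) * (\<gamma> + 2) / (2 * \<gamma> * (3 * \<gamma> + 2)) * (norm (x k - y k))\<^sup>2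
      + \<gamma> ^ 3 / (\<mu> * (\<gamma> + 2) * (3 * \<gamma> + 2)) * (norm (g (x k)))\<^sup>2"
    using lyapunov_quad_step_identity[where X = "x k - xstar" and Y = "y k - xstar" and G = "g (x k)"
        and X' = "x (Suc k) - xstar" and Y' = "y (Suc k) - xstar" and G' = "g (x (Suc k))"]
    by (simp add: y_step x_step[of k] algebra_simps)
  moreover have "0 \<le> \<mu> * (1 + \<gamma>) * (2 * \<gamma> + 1) * (\<gamma> + 2) / (2 * \<gamma> * (3 * \<gamma> + 2)) * (norm (x k - y k))\<^sup>2
      + \<gamma> ^ 3 / (\<mu> * (\<gamma> + 2) * (3 * \<gamma> + 2)) * (norm (g (x k)))\<^sup>2"
    using mu_pos gamma_pos by simp
  moreover have "\<gamma> * ?I1 \<le> \<gamma> * (f xstar - f (x k))"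
    using interpolation_minimizer[of k] gamma_pos by (intro mult_left_mono) auto
  moreover have "(1 + \<gamma>) * (f (x (Suc k)) + ?I2) \<le> (1 + \<gamma>) * f (x k)"
    using interpolation[where u = "x k" and v = "x (Suc k)"] gamma_pos by (intro mult_left_mono) auto
  ultimately show ?thesis
    unfolding lyapunov_def by (simp add: algebra_simps)
qed

lemma lyapunov_power_le: "(1 + \<gamma>) ^ k * lyapunov k \<le> lyapunov 0"
proof (induction k)
  case 0
  then show ?case by simp
next
  case (Suc k)
  have "(1 + \<gamma>) ^ Suc k * lyapunov (Suc k) = (1 + \<gamma>) ^ k * ((1 + \<gamma>) * lyapunov (Suc k))"
    by simp
  also have "\<dots> \<le> (1 + \<gamma>) ^ k * lyapunov k"
    using lyapunov_Suc_le gamma_pos by (intro mult_left_mono) auto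
  finally show ?case
    using Suc.IH by linarith
qed

lemma lyapunov_0_le: "lyapunov 0 \<le> L\<^sup>2 / (L - \<mu>) * (norm (x 0 - xstar))\<^sup>2"
proof -
  have "lyapunov 0 \<le> lyapunov_quad (x 0 - xstar) (x 0 - xstar) (g (x 0))
      - interpolation_term (- (x 0 - xstar)) 0 (g (x 0))"
    using interpolation_minimizer[of 0] by (simp add: lyapunov_def y_0)
  also have "\<dots> = L / (L - \<mu>) * (g (x 0) \<bullet> (x 0 - xstar))"
    by (rule lyapunov_quad_diagonal)
  also have "\<dots> \<le> L / (L - \<mu>) * (L * (norm (x 0 - xstar))\<^sup>2)"
  proof -
    have "g (x 0) \<bullet> (x 0 - xstar) \<le> norm (g (x 0) - g xstar) * norm (x 0 - xstar)"
      by (simp add: gradient_minimizer norm_cauchy_schwarz)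
    also have "\<dots> \<le> L * norm (x 0 - xstar) * norm (x 0 - xstar)"
      by (rule mult_right_mono[OF lipschitz norm_ge_zero])
    finally show ?thesis
      using mu_less_L mu_pos by (intro mult_left_mono) (auto simp: power2_eq_square)
  qed
  finally show ?thesis
    by (simp add: power2_eq_square)
qed

lemma objective_gap_le_lyapunov: "2 * \<gamma> * (f (x k) - f xstar) \<le> (2 * \<gamma> + 1) * lyapunov k"
proof -
  let ?J = "interpolation_term (x k - xstar) (g (x k)) 0"
  let ?I = "interpolation_term (- (x k - xstar)) 0 (g (x k))"
  have "0 \<le> (1 / (2 * \<gamma> + 1) + \<gamma> / (1 + \<gamma>)) * (f (x k) - f xstar - ?J)"
    using interpolation[where u = "x k" and v = xstar] gamma_pos
    by (intro mult_nonneg_nonneg add_nonneg_nonneg) (auto simp: gradient_minimizer)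
  moreover have "0 \<le> \<gamma> / (1 + \<gamma>) * (f xstar - f (x k) - ?I)"
    using interpolation_minimizer[of k] gamma_pos by (intro mult_nonneg_nonneg) auto
  ultimately have "0 \<le> (f (x k) - f xstar) / (2 * \<gamma> + 1) + lyapunov_quad (x k - xstar) (y k - xstar) (g (x k))"
    using lyapunov_quad_lower_bound[of "x k - xstar" "y k - xstar" "g (x k)"]
    by (simp add: algebra_simps add_divide_distrib diff_divide_distrib)
  then have "0 \<le> f (x k) - f xstar + (2 * \<gamma> + 1) * lyapunov_quad (x k - xstar) (y k - xstar) (g (x k))"
    using gamma_pos by (simp add: field_simps add_pos_pos)
  then show ?thesis
    by (simp add: lyapunov_def algebra_simps)
qed

lemma objective_gap_bound:
  "f (x k) - f xstar \<le> (1 + \<gamma>) powr (2 - real k) / (2 * \<gamma>) * ((\<mu> + 2 * L) / 2) * (norm (x 0 - xstar))\<^sup>2"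
proof -
  have "(1 + \<gamma>) ^ k * (2 * \<gamma> * (f (x k) - f xstar)) \<le> (1 + \<gamma>) ^ k * ((2 * \<gamma> + 1) * lyapunov k)"
    using objective_gap_le_lyapunov gamma_pos by (intro mult_left_mono) auto
  also have "\<dots> = (2 * \<gamma> + 1) * ((1 + \<gamma>) ^ k * lyapunov k)"
    by (simp add: mult.left_commute)
  also have "\<dots> \<le> (2 * \<gamma> + 1) * lyapunov 0"
    using lyapunov_power_le gamma_pos by (intro mult_left_mono) auto
  also have "\<dots> \<le> (2 * \<gamma> + 1) * (L\<^sup>2 / (L - \<mu>) * (norm (x 0 - xstar))\<^sup>2)"
    using lyapunov_0_le gamma_pos by (intro mult_left_mono) auto
  also have "\<dots> \<le> (1 + \<gamma>)\<^sup>2 * ((\<mu> + 2 * L) / 2) * (norm (x 0 - xstar))\<^sup>2"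
    using mult_right_mono[OF initial_constant_le, of "(norm (x 0 - xstar))\<^sup>2"] by (simp add: mult.assoc)
  finally have "f (x k) - f xstar \<le> (1 + \<gamma>)\<^sup>2 / (1 + \<gamma>) ^ k / (2 * \<gamma>) * ((\<mu> + 2 * L) / 2) * (norm (x 0 - xstar))\<^sup>2"
    using gamma_pos by (simp add: field_simps)
  moreover have "(1 + \<gamma>) powr (2 - real k) = (1 + \<gamma>)\<^sup>2 / (1 + \<gamma>) ^ k"
    using gamma_pos by (simp add: powr_diff powr_realpow)
  ultimately show ?thesis
    by simp
qed
end

lemma momentum_gamma_root:
  fixes \<kappa> :: real
  assumes "1 < \<kappa>"
  defines "\<gamma> \<equiv> (sqrt (8 * \<kappa> + 1) + 3) / (2 * \<kappa> - 2)"
  shows "0 < \<gamma>" and "\<kappa> * \<gamma>\<^sup>2 = (1 + \<gamma>) * (\<gamma> + 2)"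
proof -
  show "0 < \<gamma>"
    unfolding \<gamma>_def using assms by (intro divide_pos_pos add_nonneg_pos) auto
  have "2 * (\<kappa> - 1) * \<gamma> - 3 = sqrt (8 * \<kappa> + 1)"
    unfolding \<gamma>_def using assms by (simp add: field_simps)
  then have "(2 * (\<kappa> - 1) * \<gamma> - 3)\<^sup>2 = 8 * \<kappa> + 1"
    using assms by simp
  moreover have "(2 * (\<kappa> - 1) * \<gamma> - 3)\<^sup>2 - (8 * \<kappa> + 1)
      = 4 * (\<kappa> - 1) * ((\<kappa> - 1) * \<gamma>\<^sup>2 - 3 * \<gamma> - 2)"
    by algebra
  ultimately have "(\<kappa> - 1) * \<gamma>\<^sup>2 - 3 * \<gamma> - 2 = 0"
    using assms by simp
  then show "\<kappa> * \<gamma>\<^sup>2 = (1 + \<gamma>) * (\<gamma> + 2)"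
    by (simp add: algebra_simps power2_eq_square)
qed

theorem theorem4:
  fixes f :: "real ^ 'n \<Rightarrow> real" and g :: "real ^ 'n \<Rightarrow> real ^ 'n"
    and \<mu> L :: real and xstar x0 :: "real ^ 'n"
    and x y :: "nat \<Rightarrow> real ^ 'n" and k :: nat
  assumes grad: "\<And>z. (f has_derivative (\<lambda>h. g z \<bullet> h)) (at z)"
    and sc: "strongly_convex_on \<mu> UNIV f"
    and lip: "\<And>u v. norm (g u - g v) \<le> L * norm (u - v)"
    and mu_pos: "0 < \<mu>" and mu_L: "\<mu> < L"
    and minim: "\<And>z. f xstar \<le> f z"
    and x_0: "x 0 = x0" and y_0: "y 0 = x0"
    and y_step: "\<And>j. y (Suc j) = x j - (1 / L) *\<^sub>R g (x j)"
    and x_step: "\<And>j. x (Suc j) = y (Suc j)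
        + (1 / (2 * ((sqrt (8 * (L / \<mu>) + 1) + 3) / (2 * (L / \<mu>) - 2)) + 1)) *\<^sub>R (y (Suc j) - y j)
        + (1 / (2 * ((sqrt (8 * (L / \<mu>) + 1) + 3) / (2 * (L / \<mu>) - 2)) + 1)) *\<^sub>R (y (Suc j) - x j)"
    and k_pos: "1 \<le> k"
  shows "f (x k) - f xstar \<le>
    (1 + (sqrt (8 * (L / \<mu>) + 1) + 3) / (2 * (L / \<mu>) - 2)) powr (2 - real k)
      / (2 * ((sqrt (8 * (L / \<mu>) + 1) + 3) / (2 * (L / \<mu>) - 2)))
      * ((\<mu> + 2 * L) / 2) * (norm (x0 - xstar))\<^sup>2"
proof -
  define \<gamma> where "\<gamma> = (sqrt (8 * (L / \<mu>) + 1) + 3) / (2 * (L / \<mu>) - 2)"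
  have "1 < L / \<mu>"
    using mu_pos mu_L by simp
  from momentum_gamma_root[OF this, folded \<gamma>_def]
  have "0 < \<gamma>" and "L * \<gamma>\<^sup>2 = \<mu> * (1 + \<gamma>) * (\<gamma> + 2)"
    using mu_pos by (simp_all add: field_simps)
  then interpret momentum_method \<mu> L \<gamma> f g xstar x y
    using grad sc lip mu_pos minim x_step by unfold_locales (simp_all add: x_0 y_0 y_step \<gamma>_def)
  \<comment> \<open>The bound holds for every \<open>k\<close>.\<close>
  show ?thesis
    using objective_gap_bound[of k] unfolding x_0 \<gamma>_def .
qed

end
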